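(* Let $E$, $\Lambda_\pm$, $\Lambda_+^*$, $\omega$, $\sigma'$ and $\pi_-\colon Q\to\mathbb P(\Lambda_-)$ be as in the context. Let $v=(\sigma,\tau)\in\Lambda_+\oplus\Lambda_+^*$ be a nonzero isotropic vector and let $\lambda=\tau/(\sigma\lrcorner\omega)\in\mathbb C\cup\{\infty\}$ (i.e. $\tau=\lambda\,\sigma\lrcorner\omega$ if $\sigma\ne0$, and $\lambda=\infty$ if $\sigma=0$). Then $\pi_-([v])$ is the line spanned by $(\sigma',\lambda\,\sigma'\lrcorner\omega)$ (interpreted as $(0,\sigma'\lrcorner\omega)$ if $\lambda=\infty$).
   Context: $E$ is a 4-dimensional complex vector space with nondegenerate symmetric bilinear form $q$; one connected component of the space of 2-dimensional isotropic subspaces is fixed and called positive, the other negative. Every isotropic line $\langle v\rangle$ lies in a unique positive maximal isotropic subspace $\Lambda_v^+$ and a unique negative one $\Lambda_v^-$. $\Lambda_+$ is a fixed positive and $\Lambda_-$ a fixed negative maximal isotropic subspace; $\Lambda_+\cap\Lambda_-$ is a line, spanned by $\sigma'$. $\Lambda'$ is a maximal isotropic subspace with $\Lambda_+\cap\Lambda'=0$, identified with $\Lambda_+^*$ via $q$, so $E=\Lambda_+\oplus\Lambda_+^*$ and $(\sigma,\tau)$ is isotropic iff $\tau(\sigma)=0$. $\omega\in\bigwedge^2\Lambda_+^*$ is nonzero and $\sigma\lrcorner\omega=\omega(\sigma,\cdot)\in\Lambda_+^*$; for isotropic $(\sigma,\tau)$, $\tau$ and $\sigma\lrcorner\omega$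 are proportional. $Q\subset\mathbb P(E)$ is the quadric of isotropic lines and $\pi_-\colon Q\to\mathbb P(\Lambda_-)$ is $[v]\mapsto\Lambda_v^+\cap\Lambda_-$. *)

theory Defs
  imports "HOL-Analysis.Analysis"
begin

text \<open>The positive maximal isotropic subspace \<Lambda>+ is complex^2, its dual \<Lambda>+* is
  complex^2 with the standard pairing, and E = \<Lambda>+ \<oplus> \<Lambda>+* is complex^4 with coordinates
  (sigma 1, sigma 2, tau 1, tau 2).  Linear algebra (span, subspace, dim) is complex linear
  algebra via the library interpretation vec of vector_space (*s).\<close>

type_synonym lam = "complex ^ 2"
type_synonym espace = "complex ^ 4"

definition pairing :: "lam \<Rightarrow> lam \<Rightarrow> complex" where
  "pairing t s = t$1 * s$1 + t$2 * s$2"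

definition mkE :: "lam \<Rightarrow> lam \<Rightarrow> espace" where
  "mkE s t = (\<chi> i::4. if i = 1 then s$1 else if i = 2 then s$2 else if i = 3 then t$1 else t$2)"

definition sigE :: "espace \<Rightarrow> lam" where
  "sigE v = (\<chi> i::2. if i = 1 then v$1 else v$2)"

definition tauE :: "espace \<Rightarrow> lam" where
  "tauE v = (\<chi> i::2. if i = 1 then v$3 else v$4)"

definition qf :: "espace \<Rightarrow> espace \<Rightarrow> complex" where
  "qf v w = pairing (tauE v) (sigE w) + pairing (tauE w) (sigE v)"

definition iso_sub :: "espace set \<Rightarrow> bool" where
  "iso_sub L \<longleftrightarrow> vec.subspace L \<and> (\<forall>v\<in>L. \<forall>w\<in>L. qf v w = 0)"

definition max_iso :: "espace set \<Rightarrow> bool" where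
  "max_iso L \<longleftrightarrow> iso_sub L \<and> (\<forall>M. iso_sub M \<and> L \<subseteq> M \<longrightarrow> M = L)"

definition Lplus :: "espace set" where
  "Lplus = {mkE s 0 | s. True}"

text \<open>Two maximal isotropic subspaces of a 4-dimensional quadratic space lie in the same
  connected component iff their intersection has even dimension.\<close>
definition positive :: "espace set \<Rightarrow> bool" where
  "positive L \<longleftrightarrow> max_iso L \<and> even (vec.dim (L \<inter> Lplus))"

definition negative :: "espace set \<Rightarrow> bool" where
  "negative L \<longleftrightarrow> max_iso L \<and> odd (vec.dim (L \<inter> Lplus))"

definition Lam_pos :: "espace \<Rightarrow> espace set" where
  "Lam_pos v = (THE L. positive L \<and> v \<in> L)"

definition pi_minus :: "espace set \<Rightarrow> espace \<Rightarrow> espace set" where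
  "pi_minus Lminus v = Lam_pos v \<inter> Lminus"

definition alt_form :: "(lam \<Rightarrow> lam \<Rightarrow> complex) \<Rightarrow> bool" where
  "alt_form w \<longleftrightarrow>
     (\<forall>x y z. w (x + y) z = w x z + w y z) \<and> (\<forall>c x y. w (c *s x) y = c * w x y) \<and>
     (\<forall>x y z. w x (y + z) = w x y + w x z) \<and> (\<forall>c x y. w x (c *s y) = c * w x y) \<and>
     (\<forall>x. w x x = 0)"

text \<open>Contraction sigma \<lrcorner> omega = omega(sigma, _) as an element of \<Lambda>+* = complex^2
  (coordinates w.r.t. the dual basis), so pairing (contr w s) x = w s x.\<close>
definition contr :: "(lam \<Rightarrow> lam \<Rightarrow> complex) \<Rightarrow> lam \<Rightarrow> lam" where
  "contr w s = (\<chi> i. w s (axis i 1))"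

end

theory Submission
  imports Defs
begin

text \<open>In coordinates every alternating form is \<open>\<omega> = k \<cdot> det\<close> with \<open>k \<noteq> 0\<close>, so
  \<open>\<sigma> \<lrcorner> \<omega> = k \<cdot> perp \<sigma>\<close> with \<open>perp (\<sigma>\<^sub>1, \<sigma>\<^sub>2) = (-\<sigma>\<^sub>2, \<sigma>\<^sub>1)\<close>.
  The subspace \<open>0 \<oplus> \<Lambda>\<^sub>+\<^sup>*\<close> and the graphs \<open>{(s, l \<cdot> perp s)}\<close> (with \<open>l = 0\<close> giving
  \<open>\<Lambda>\<^sub>+\<close>) are isotropic and contain their \<open>q\<close>-orthogonal, hence are maximal, and they
  are positive because they meet \<open>\<Lambda>\<^sub>+\<close> in dimension 0 or 2. Conversely a positive
  subspace either is \<open>\<Lambda>\<^sub>+\<close> or meets it trivially, and then orthogonality to a nonzero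
  vector \<open>v\<close> forces it to be the member of this family through \<open>v\<close>. So \<open>\<Lambda>\<^sub>v\<^sup>+\<close>
  is \<open>0 \<oplus> \<Lambda>\<^sub>+\<^sup>*\<close> if \<open>\<sigma> = 0\<close> and the graph with \<open>l = \<lambda> k\<close> otherwise. In the same way
  \<open>\<Lambda>\<^sub>-\<close> is forced to be the span of \<open>(\<sigma>', 0)\<close> and \<open>(0, perp \<sigma>')\<close>, and intersecting
  gives the line.\<close>

lemma lam_eq_iff: "(x::lam) = y \<longleftrightarrow> x$1 = y$1 \<and> x$2 = y$2"
  by (auto simp: vec_eq_iff forall_2)

lemma espace_eq_iff: "(x::espace) = y \<longleftrightarrow> x$1 = y$1 \<and> x$2 = y$2 \<and> x$3 = y$3 \<and> x$4 = y$4"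
  by (auto simp: vec_eq_iff forall_4)

lemma mkE_nth [simp]: "mkE s t $ 1 = s$1" "mkE s t $ 2 = s$2" "mkE s t $ 3 = t$1" "mkE s t $ 4 = t$2"
  by (simp_all add: mkE_def)

lemma espace_cases:
  obtains s t where "v = mkE s t"
proof
  show "v = mkE (sigE v) (tauE v)"
    by (simp add: espace_eq_iff sigE_def tauE_def)
qed

lemma mkE_eq_iff [simp]: "mkE s t = mkE s' t' \<longleftrightarrow> s = s' \<and> t = t'"
  by (auto simp: espace_eq_iff lam_eq_iff)

lemma mkE_eq_0_iff [simp]: "mkE s t = 0 \<longleftrightarrow> s = 0 \<and> t = 0"
  by (auto simp: espace_eq_iff lam_eq_iff)

lemma mkE_diff: "mkE s t - mkE s' t' = mkE (s - s') (t - t')"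
  and mkE_scale: "c *s mkE s t = mkE (c *s s) (c *s t)"
  by (simp_all add: espace_eq_iff)

lemma qf_mkE: "qf (mkE s t) (mkE s' t') = pairing t s' + pairing t' s"
  by (simp add: qf_def pairing_def sigE_def tauE_def)

lemma pairing_nondegenerate:
  assumes "\<And>e. pairing t e = 0"
  shows "t = 0"
  using assms[of "axis 1 1"] assms[of "axis 2 1"] by (simp add: pairing_def axis_def lam_eq_iff)

definition perp :: "lam \<Rightarrow> lam" where
  "perp s = (\<chi> i. if i = 1 then - s$2 else s$1)"

lemma perp_nth [simp]: "perp s $ 1 = - s$2" "perp s $ 2 = s$1"
  by (simp_all add: perp_def)

lemma perp_eq_0_iff [simp]: "perp s = 0 \<longleftrightarrow> s = 0"
  by (auto simp: lam_eq_iff)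

lemma pairing_perp: "pairing (perp s) x = s$1 * x$2 - s$2 * x$1"
  by (simp add: pairing_def)

lemma alt_form_eq_det:
  assumes "alt_form w"
  shows "w x y = w (axis 1 1) (axis 2 1) * (x$1 * y$2 - x$2 * y$1)"
proof -
  let ?e1 = "axis 1 1 :: lam" and ?e2 = "axis 2 1 :: lam"
  have add: "w (x + y) z = w x z + w y z" "w z (x + y) = w z x + w z y"
    and scale: "w (c *s x) z = c * w x z" "w z (c *s x) = c * w z x"
    and alt: "w x x = 0" for x y z c
    using assms by (auto simp: alt_form_def)
  have "w (?e1 + ?e2) (?e1 + ?e2) = w ?e1 ?e1 + w ?e2 ?e1 + (w ?e1 ?e2 + w ?e2 ?e2)"
    by (simp only: add)
  then have anti: "w ?e2 ?e1 = - w ?e1 ?e2"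
    by (simp add: alt eq_neg_iff_add_eq_0 add.commute)
  have "x = x$1 *s ?e1 + x$2 *s ?e2" "y = y$1 *s ?e1 + y$2 *s ?e2"
    by (simp_all add: lam_eq_iff axis_def)
  then have "w x y = w (x$1 *s ?e1 + x$2 *s ?e2) (y$1 *s ?e1 + y$2 *s ?e2)"
    by simp
  also have "\<dots> = x$1 * y$2 * w ?e1 ?e2 + x$2 * y$1 * w ?e2 ?e1"
    by (simp add: add scale alt algebra_simps)
  finally show ?thesis
    by (simp add: anti algebra_simps)
qed

lemma contr_eq_scale_perp:
  assumes "alt_form w"
  shows "contr w s = w (axis 1 1) (axis 2 1) *s perp s"
  using alt_form_eq_det[OF assms, of s "axis 1 1"] alt_form_eq_det[OF assms, of s "axis 2 1"]
  by (simp add: contr_def lam_eq_iff axis_def)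

lemma alt_form_basis_ne_0:
  assumes "alt_form w" "w \<noteq> (\<lambda>_ _. 0)"
  shows "w (axis 1 1) (axis 2 1) \<noteq> 0"
  using assms alt_form_eq_det[OF assms(1)] by fastforce

lemma det_eq_0_imp_parallel:
  assumes "\<sigma> \<noteq> 0" "pairing (perp \<sigma>) s = 0"
  obtains a where "s = a *s \<sigma>"
proof (cases "\<sigma>$1 = 0")
  case True
  with assms have "s = (s$2 / \<sigma>$2) *s \<sigma>"
    by (auto simp: lam_eq_iff pairing_perp)
  then show ?thesis ..
next
  case False
  with assms have "s = (s$1 / \<sigma>$1) *s \<sigma>"
    by (auto simp: lam_eq_iff pairing_perp field_simps)
  then show ?thesis ..
qed

lemma annihilator_multiple_perp:
  assumes "\<sigma> \<noteq> 0" "pairing t \<sigma> = 0"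
  obtains b where "t = b *s perp \<sigma>"
proof (cases "\<sigma>$1 = 0")
  case True
  with assms have "t = (- t$1 / \<sigma>$2) *s perp \<sigma>"
    by (auto simp: lam_eq_iff pairing_def)
  then show ?thesis ..
next
  case False
  with assms have "t = (t$2 / \<sigma>$1) *s perp \<sigma>"
    by (auto simp: lam_eq_iff pairing_def field_simps add_eq_0_iff)
  then show ?thesis ..
qed

lemma annihilates_basis_eq_0:
  assumes "pairing (perp \<sigma>) s \<noteq> 0" "pairing d \<sigma> = 0" "pairing d s = 0"
  shows "d = 0"
proof -
  have "d$1 * pairing (perp \<sigma>) s = s$2 * pairing d \<sigma> - \<sigma>$2 * pairing d s"
    "d$2 * pairing (perp \<sigma>) s = \<sigma>$1 * pairing d s - s$1 * pairing d \<sigma>"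
    by (simp_all add: pairing_def algebra_simps)
  with assms show ?thesis
    by (simp add: lam_eq_iff)
qed

lemma iso_subD:
  assumes "iso_sub L"
  shows "vec.subspace L" "x \<in> L \<Longrightarrow> y \<in> L \<Longrightarrow> qf x y = 0"
  using assms by (auto simp: iso_sub_def)

lemma max_iso_imp_iso_sub: "max_iso L \<Longrightarrow> iso_sub L"
  by (simp add: max_iso_def)

lemma max_iso_eqI: "max_iso L \<Longrightarrow> iso_sub M \<Longrightarrow> L \<subseteq> M \<Longrightarrow> M = L"
  by (simp add: max_iso_def)

lemma mkE_mem_Lplus_iff [simp]: "mkE s t \<in> Lplus \<longleftrightarrow> t = 0"
  by (auto simp: Lplus_def)

definition q_orth :: "espace set \<Rightarrow> espace set" where
  "q_orth M = {x. \<forall>y\<in>M. qf x y = 0}"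

lemma max_iso_if_q_orth_subset:
  assumes "iso_sub M" "q_orth M \<subseteq> M"
  shows "max_iso M"
  unfolding max_iso_def
proof (intro conjI allI impI assms(1))
  fix M' assume M': "iso_sub M' \<and> M \<subseteq> M'"
  then have "M' \<subseteq> q_orth M"
    by (auto simp: iso_sub_def q_orth_def)
  with M' assms(2) show "M' = M"
    by blast
qed

lemma iso_sub_range:
  assumes "Vector_Spaces.linear (*s) (*s) f" "\<And>x y. qf (f x) (f y) = 0"
  shows "iso_sub (range f)"
  using vec.linear_subspace_image[OF assms(1) vec.subspace_UNIV] assms(2)
  by (auto simp: iso_sub_def)

definition skew_graph :: "complex \<Rightarrow> espace set" where
  "skew_graph l = range (\<lambda>s. mkE s (l *s perp s))"

definition Ldual :: "espace set" where
  "Ldual = range (mkE 0)"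

definition Lneg :: "lam \<Rightarrow> espace set" where
  "Lneg \<sigma> = range (\<lambda>p::lam. mkE (p$1 *s \<sigma>) (p$2 *s perp \<sigma>))"

lemma Lplus_eq_skew_graph_0: "Lplus = skew_graph 0"
  by (auto simp: Lplus_def skew_graph_def)

lemma mem_Lneg_iff: "x \<in> Lneg \<sigma> \<longleftrightarrow> (\<exists>a b. x = mkE (a *s \<sigma>) (b *s perp \<sigma>))"
proof
  assume "\<exists>a b. x = mkE (a *s \<sigma>) (b *s perp \<sigma>)"
  then obtain a b where "x = mkE (a *s \<sigma>) (b *s perp \<sigma>)"
    by blast
  then show "x \<in> Lneg \<sigma>"
    unfolding Lneg_def by (intro image_eqI[where x = "vector [a, b]"]) simp_all
qed (auto simp: Lneg_def)

lemma max_iso_skew_graph: "max_iso (skew_graph l)"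
proof (rule max_iso_if_q_orth_subset)
  show "iso_sub (skew_graph l)"
    unfolding skew_graph_def
    by (rule iso_sub_range) (unfold_locales, simp_all add: espace_eq_iff qf_mkE pairing_def algebra_simps)
  show "q_orth (skew_graph l) \<subseteq> skew_graph l"
  proof
    fix x assume x: "x \<in> q_orth (skew_graph l)"
    obtain s t where xst: "x = mkE s t"
      by (rule espace_cases)
    have "pairing (t - l *s perp s) e = qf x (mkE e (l *s perp e))" for e
      by (simp add: xst qf_mkE pairing_def algebra_simps)
    also have "\<dots> e = 0" for e
      using x by (auto simp: q_orth_def skew_graph_def)
    finally have "t = l *s perp s"
      using pairing_nondegenerate by fastforce
    then show "x \<in> skew_graph l"
      unfolding xst skew_graph_def by blast
  qed
qed

lemma max_iso_Ldual: "max_iso Ldual"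
proof (rule max_iso_if_q_orth_subset)
  show "iso_sub Ldual"
    unfolding Ldual_def
    by (rule iso_sub_range) (unfold_locales, simp_all add: espace_eq_iff qf_mkE pairing_def)
  show "q_orth Ldual \<subseteq> Ldual"
  proof
    fix x assume x: "x \<in> q_orth Ldual"
    obtain s t where xst: "x = mkE s t"
      by (rule espace_cases)
    have "pairing e s = qf x (mkE 0 e)" for e
      by (simp add: xst qf_mkE pairing_def)
    also have "\<dots> e = 0" for e
      using x by (auto simp: q_orth_def Ldual_def)
    finally have "s = 0"
      using pairing_nondegenerate[of s] by (simp add: pairing_def mult.commute)
    then show "x \<in> Ldual"
      by (simp add: xst Ldual_def)
  qed
qed

lemma iso_sub_Lneg: "iso_sub (Lneg \<sigma>)"
  unfolding Lneg_def
  by (rule iso_sub_range) (unfold_locales, simp_all add: espace_eq_iff qf_mkE pairing_def algebra_simps)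

lemma vec_span_singleton_scale:
  fixes x :: "'a::field ^ 'n"
  assumes "c \<noteq> 0"
  shows "vec.span {c *s x} = vec.span {x}"
proof -
  have "surj (\<lambda>k. k * c)"
    by (rule surjI[of _ "\<lambda>k. k / c"]) (simp add: assms)
  then have "range (\<lambda>k. (k * c) *s x) = range (\<lambda>k. k *s x)"
    by (simp add: image_image[of "\<lambda>k. k *s x" "\<lambda>k. k * c", symmetric])
  then show ?thesis
    by (simp add: vec.span_singleton vector_smult_assoc)
qed

lemma dim_Lplus: "vec.dim Lplus = 2"
proof -
  have lin: "Vector_Spaces.linear (*s) (*s) (\<lambda>s::lam. mkE s 0)"
    by unfold_locales (simp_all add: espace_eq_iff)
  have "Lplus = range (\<lambda>s::lam. mkE s 0)"
    by (auto simp: Lplus_def)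
  then have "vec.dim Lplus = vec.dim (UNIV :: lam set)"
    using vec.dim_image_eq[OF lin, of UNIV] by (simp add: inj_on_def)
  then show ?thesis
    using vec_dim_card[where 'a = complex and 'n = 2] by simp
qed

lemma positive_cases:
  assumes "positive L"
  shows "L = Lplus \<or> L \<inter> Lplus \<subseteq> {0}"
proof (cases "vec.dim (L \<inter> Lplus) = 0")
  case True
  then show ?thesis
    by simp
next
  case False
  have L: "max_iso L" and even: "even (vec.dim (L \<inter> Lplus))"
    using assms by (simp_all add: positive_def)
  from even obtain m where m: "vec.dim (L \<inter> Lplus) = 2 * m"
    by (rule evenE)
  with False have "m \<noteq> 0"
    by auto
  with m have "vec.dim Lplus \<le> vec.dim (L \<inter> Lplus)"
    by (simp add: dim_Lplus)
  then have "vec.span (L \<inter> Lplus) = vec.span Lplus"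
    by (intro vec.dim_eq_span) auto
  moreover have "vec.subspace (L \<inter> Lplus)" "vec.subspace Lplus"
    using iso_subD(1) L max_iso_imp_iso_sub max_iso_skew_graph[of 0]
    by (auto simp: Lplus_eq_skew_graph_0 intro: vec.subspace_inter)
  ultimately have "Lplus \<subseteq> L"
    by (metis Int_lower1 vec.span_eq_iff)
  then have "L = Lplus"
    using max_iso_eqI[OF max_iso_skew_graph[of 0]] max_iso_imp_iso_sub[OF L]
    by (simp add: Lplus_eq_skew_graph_0)
  then show ?thesis ..
qed

lemma positive_if_meets_Lplus_trivially:
  assumes "max_iso L" "L \<inter> Lplus \<subseteq> {0}"
  shows "positive L"
proof -
  have "vec.dim (L \<inter> Lplus) = 0"
    using assms(2) by simp
  with assms(1) show ?thesis
    by (simp add: positive_def del: vec.dim_eq_0)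
qed

lemma positive_skew_graph: "positive (skew_graph l)"
proof (cases "l = 0")
  case True
  then show ?thesis
    using max_iso_skew_graph[of 0] by (simp add: positive_def dim_Lplus flip: Lplus_eq_skew_graph_0)
next
  case False
  then have "skew_graph l \<inter> Lplus \<subseteq> {0}"
    by (auto simp: skew_graph_def)
  then show ?thesis
    by (rule positive_if_meets_Lplus_trivially[OF max_iso_skew_graph])
qed

lemma positive_Ldual: "positive Ldual"
  by (rule positive_if_meets_Lplus_trivially[OF max_iso_Ldual]) (auto simp: Ldual_def)

lemma transversal_subset_Ldual:
  assumes L: "iso_sub L" "L \<inter> Lplus \<subseteq> {0}" and u: "mkE 0 u \<in> L" "u \<noteq> 0"
  shows "L \<subseteq> Ldual"
proof
  fix x assume x: "x \<in> L"
  obtain s t where xst: "x = mkE s t"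
    by (rule espace_cases)
  have "s = 0"
  proof (rule ccontr)
    assume s: "s \<noteq> 0"
    have "pairing u s = qf x (mkE 0 u)"
      by (simp add: xst qf_mkE pairing_def)
    also have "\<dots> = 0"
      using iso_subD(2)[OF L(1) x u(1)] .
    finally obtain b where b: "u = b *s perp s"
      by (rule annihilator_multiple_perp[OF s])
    have "2 * pairing t s = qf x x"
      by (simp add: xst qf_mkE)
    also have "\<dots> = 0"
      using iso_subD(2)[OF L(1) x x] .
    finally obtain b' where b': "t = b' *s perp s"
      using annihilator_multiple_perp[OF s] by auto
    have "b \<noteq> 0"
      using b u(2) by auto
    then have "mkE s 0 = x - (b' / b) *s mkE 0 u"
      by (simp add: xst b b' mkE_scale mkE_diff lam_eq_iff)
    also have "\<dots> \<in> L"
      using iso_subD(1)[OF L(1)] x u(1) by (intro vec.subspace_diff vec.subspace_scale)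
    finally have "mkE s 0 \<in> L \<inter> Lplus"
      by simp
    with L(2) s show False
      by auto
  qed
  then show "x \<in> Ldual"
    by (simp add: xst Ldual_def)
qed

lemma transversal_subset_skew_graph:
  assumes L: "iso_sub L" "L \<inter> Lplus \<subseteq> {0}"
    and v: "mkE \<sigma> (l *s perp \<sigma>) \<in> L" "\<sigma> \<noteq> 0"
  shows "L \<subseteq> skew_graph l"
proof
  fix x assume x: "x \<in> L"
  obtain s t where xst: "x = mkE s t"
    by (rule espace_cases)
  define d where "d = t - l *s perp s"
  have "pairing d \<sigma> = qf x (mkE \<sigma> (l *s perp \<sigma>))"
    by (simp add: xst d_def qf_mkE pairing_def algebra_simps)
  also have "\<dots> = 0"
    using iso_subD(2)[OF L(1) x v(1)] .
  finally have d_\<sigma>: "pairing d \<sigma> = 0" .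
  have "2 * pairing d s = qf x x"
    by (simp add: xst d_def qf_mkE pairing_def algebra_simps)
  also have "\<dots> = 0"
    using iso_subD(2)[OF L(1) x x] .
  finally have d_s: "pairing d s = 0"
    by simp
  have "d = 0"
  proof (cases "pairing (perp \<sigma>) s = 0")
    case False
    then show ?thesis
      using annihilates_basis_eq_0 d_\<sigma> d_s by blast
  next
    case True
    then obtain a where a: "s = a *s \<sigma>"
      by (rule det_eq_0_imp_parallel[OF v(2)])
    have "mkE 0 d = x - a *s mkE \<sigma> (l *s perp \<sigma>)"
      by (simp add: xst a d_def mkE_scale mkE_diff lam_eq_iff)
    also have "\<dots> \<in> L"
      using iso_subD(1)[OF L(1)] x v(1) by (intro vec.subspace_diff vec.subspace_scale)
    finally have "mkE 0 d \<in> L" .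
    moreover have "mkE \<sigma> (l *s perp \<sigma>) \<notin> Ldual"
      using v(2) by (auto simp: Ldual_def)
    ultimately show "d = 0"
      using transversal_subset_Ldual[OF L] v(1) by blast
  qed
  then show "x \<in> skew_graph l"
    unfolding xst skew_graph_def d_def by auto
qed

lemma positive_eq_Ldual:
  assumes L: "positive L" and u: "mkE 0 u \<in> L" "u \<noteq> 0"
  shows "L = Ldual"
  using positive_cases[OF L]
proof
  assume "L = Lplus"
  with u show ?thesis
    by simp
next
  assume "L \<inter> Lplus \<subseteq> {0}"
  moreover have L_max: "max_iso L"
    using L by (simp add: positive_def)
  ultimately have "L \<subseteq> Ldual"
    using max_iso_imp_iso_sub transversal_subset_Ldual u by blast
  with L_max show ?thesis
    using max_iso_eqI max_iso_imp_iso_sub[OF max_iso_Ldual] by blast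
qed

lemma positive_eq_skew_graph:
  assumes L: "positive L" and v: "mkE \<sigma> (l *s perp \<sigma>) \<in> L" "\<sigma> \<noteq> 0"
  shows "L = skew_graph l"
  using positive_cases[OF L]
proof
  assume "L = Lplus"
  with v have "l = 0"
    by (auto simp: lam_eq_iff)
  with \<open>L = Lplus\<close> show ?thesis
    by (simp add: Lplus_eq_skew_graph_0)
next
  assume "L \<inter> Lplus \<subseteq> {0}"
  moreover have L_max: "max_iso L"
    using L by (simp add: positive_def)
  ultimately have "L \<subseteq> skew_graph l"
    using max_iso_imp_iso_sub transversal_subset_skew_graph v by blast
  with L_max show ?thesis
    using max_iso_eqI max_iso_imp_iso_sub[OF max_iso_skew_graph] by blast
qed

lemma Lam_pos_Ldual:
  assumes "u \<noteq> 0"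
  shows "Lam_pos (mkE 0 u) = Ldual"
  unfolding Lam_pos_def
proof (rule the_equality)
  show "positive Ldual \<and> mkE 0 u \<in> Ldual"
    by (intro conjI positive_Ldual) (simp add: Ldual_def)
  show "positive L \<and> mkE 0 u \<in> L \<Longrightarrow> L = Ldual" for L
    using positive_eq_Ldual assms by blast
qed

lemma Lam_pos_skew_graph:
  assumes "\<sigma> \<noteq> 0"
  shows "Lam_pos (mkE \<sigma> (l *s perp \<sigma>)) = skew_graph l"
  unfolding Lam_pos_def
proof (rule the_equality)
  show "positive (skew_graph l) \<and> mkE \<sigma> (l *s perp \<sigma>) \<in> skew_graph l"
    unfolding skew_graph_def by (intro conjI positive_skew_graph[unfolded skew_graph_def] rangeI)
  show "positive L \<and> mkE \<sigma> (l *s perp \<sigma>) \<in> L \<Longrightarrow> L = skew_graph l" for L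
    using positive_eq_skew_graph assms by blast
qed

lemma max_iso_eq_Lneg:
  assumes L: "max_iso L" and \<sigma>: "\<sigma> \<noteq> 0" and meet: "Lplus \<inter> L = vec.span {mkE \<sigma> 0}"
  shows "L = Lneg \<sigma>"
proof -
  have \<sigma>_L: "mkE \<sigma> 0 \<in> L"
    using meet vec.span_base[of "mkE \<sigma> 0" "{mkE \<sigma> 0}"] by blast
  have iso: "iso_sub L"
    using L by (rule max_iso_imp_iso_sub)
  have "L \<subseteq> Lneg \<sigma>"
  proof
    fix x assume x: "x \<in> L"
    obtain s t where xst: "x = mkE s t"
      by (rule espace_cases)
    have "pairing t \<sigma> = qf x (mkE \<sigma> 0)"
      by (simp add: xst qf_mkE pairing_def)
    also have "\<dots> = 0"
      using iso_subD(2)[OF iso x \<sigma>_L] .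
    finally obtain b where b: "t = b *s perp \<sigma>"
      by (rule annihilator_multiple_perp[OF \<sigma>])
    have "2 * b * pairing (perp \<sigma>) s = qf x x"
      by (simp add: xst b qf_mkE pairing_def algebra_simps)
    also have "\<dots> = 0"
      using iso_subD(2)[OF iso x x] .
    finally consider "b = 0" | "pairing (perp \<sigma>) s = 0"
      by auto
    then obtain a where "s = a *s \<sigma>"
    proof cases
      case 1
      with x xst b have "x \<in> Lplus \<inter> L"
        by simp
      then have "x \<in> vec.span {mkE \<sigma> 0}"
        by (simp only: meet)
      then obtain a where "x = a *s mkE \<sigma> 0"
        unfolding vec.span_singleton by blast
      with xst have "s = a *s \<sigma>"
        by (simp add: mkE_scale)
      then show ?thesis
        by (rule that)
    next
      case 2
      from this that show ?thesis
        by (rule det_eq_0_imp_parallel[OF \<sigma>])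
    qed
    with xst b show "x \<in> Lneg \<sigma>"
      by (auto simp: mem_Lneg_iff)
  qed
  then show ?thesis
    using max_iso_eqI[OF L iso_sub_Lneg] by blast
qed

lemma skew_graph_inter_Lneg: "skew_graph l \<inter> Lneg \<sigma> = vec.span {mkE \<sigma> (l *s perp \<sigma>)}"
proof (intro set_eqI iffI)
  fix x assume x: "x \<in> skew_graph l \<inter> Lneg \<sigma>"
  then obtain s where s: "x = mkE s (l *s perp s)"
    by (auto simp: skew_graph_def)
  from x obtain a b where "x = mkE (a *s \<sigma>) (b *s perp \<sigma>)"
    by (auto simp: mem_Lneg_iff)
  with s have "s = a *s \<sigma>"
    by simp
  with s have "x = a *s mkE \<sigma> (l *s perp \<sigma>)"
    by (simp add: mkE_scale lam_eq_iff)
  then show "x \<in> vec.span {mkE \<sigma> (l *s perp \<sigma>)}"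
    by (simp add: vec.span_base vec.span_scale)
next
  fix x assume "x \<in> vec.span {mkE \<sigma> (l *s perp \<sigma>)}"
  then obtain a where x: "x = a *s mkE \<sigma> (l *s perp \<sigma>)"
    unfolding vec.span_singleton by blast
  then have "x = mkE (a *s \<sigma>) (l *s perp (a *s \<sigma>))"
    by (simp add: mkE_scale lam_eq_iff)
  then have "x \<in> skew_graph l"
    unfolding skew_graph_def by (rule image_eqI) simp
  moreover from x have "x = mkE (a *s \<sigma>) ((a * l) *s perp \<sigma>)"
    by (simp add: mkE_scale lam_eq_iff)
  then have "x \<in> Lneg \<sigma>"
    unfolding mem_Lneg_iff by blast
  ultimately show "x \<in> skew_graph l \<inter> Lneg \<sigma>"
    by blast
qed

lemma Ldual_inter_Lneg:
  assumes "\<sigma> \<noteq> 0"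
  shows "Ldual \<inter> Lneg \<sigma> = vec.span {mkE 0 (perp \<sigma>)}"
proof (intro set_eqI iffI)
  fix x assume x: "x \<in> Ldual \<inter> Lneg \<sigma>"
  then obtain u where u: "x = mkE 0 u"
    by (auto simp: Ldual_def)
  from x obtain a b where "x = mkE (a *s \<sigma>) (b *s perp \<sigma>)"
    by (auto simp: mem_Lneg_iff)
  with u assms have "x = b *s mkE 0 (perp \<sigma>)"
    by (auto simp: mkE_scale lam_eq_iff)
  then show "x \<in> vec.span {mkE 0 (perp \<sigma>)}"
    by (simp add: vec.span_base vec.span_scale)
next
  fix x assume "x \<in> vec.span {mkE 0 (perp \<sigma>)}"
  then obtain b where x: "x = b *s mkE 0 (perp \<sigma>)"
    unfolding vec.span_singleton by blast
  then have "x = mkE 0 (b *s perp \<sigma>)"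
    by (simp add: mkE_scale)
  then have "x \<in> Ldual"
    by (simp add: Ldual_def)
  moreover from x have "x = mkE (0 *s \<sigma>) (b *s perp \<sigma>)"
    by (simp add: mkE_scale)
  then have "x \<in> Lneg \<sigma>"
    unfolding mem_Lneg_iff by blast
  ultimately show "x \<in> Ldual \<inter> Lneg \<sigma>"
    by blast
qed

theorem lemma10p2:
  fixes w :: "lam \<Rightarrow> lam \<Rightarrow> complex"
    and Lminus :: "espace set"
    and \<sigma>' \<sigma> \<tau> :: lam
  assumes w: "alt_form w" "w \<noteq> (\<lambda>_ _. 0)"
    and Lm: "negative Lminus"
    and s': "\<sigma>' \<noteq> 0" "Lplus \<inter> Lminus = vec.span {mkE \<sigma>' 0}"
    and v: "mkE \<sigma> \<tau> \<noteq> 0" "qf (mkE \<sigma> \<tau>) (mkE \<sigma> \<tau>) = 0"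
  shows "(\<sigma> \<noteq> 0 \<longrightarrow> (\<forall>lam::complex. \<tau> = lam *s contr w \<sigma> \<longrightarrow>
            pi_minus Lminus (mkE \<sigma> \<tau>) = vec.span {mkE \<sigma>' (lam *s contr w \<sigma>')}))
       \<and> (\<sigma> = 0 \<longrightarrow> pi_minus Lminus (mkE \<sigma> \<tau>) = vec.span {mkE 0 (contr w \<sigma>')})"
proof -
  define k where "k = w (axis 1 1) (axis 2 1)"
  have contr: "contr w s = k *s perp s" for s
    unfolding k_def by (rule contr_eq_scale_perp[OF w(1)])
  have "k \<noteq> 0"
    unfolding k_def by (rule alt_form_basis_ne_0[OF w])
  have Lminus: "Lminus = Lneg \<sigma>'"
    using Lm s' by (intro max_iso_eq_Lneg) (simp_all add: negative_def)
  show ?thesis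
  proof (intro conjI impI allI)
    fix lam :: complex
    assume "\<sigma> \<noteq> 0" "\<tau> = lam *s contr w \<sigma>"
    then have "Lam_pos (mkE \<sigma> \<tau>) = skew_graph (lam * k)"
      using Lam_pos_skew_graph by (simp add: contr vector_smult_assoc)
    then show "pi_minus Lminus (mkE \<sigma> \<tau>) = vec.span {mkE \<sigma>' (lam *s contr w \<sigma>')}"
      by (simp add: pi_minus_def Lminus skew_graph_inter_Lneg contr vector_smult_assoc)
  next
    assume "\<sigma> = 0"
    with v(1) have "Lam_pos (mkE \<sigma> \<tau>) = Ldual"
      by (simp add: Lam_pos_Ldual)
    moreover have "mkE 0 (contr w \<sigma>') = k *s mkE 0 (perp \<sigma>')"
      by (simp add: contr mkE_scale)
    ultimately show "pi_minus Lminus (mkE \<sigma> \<tau>) = vec.span {mkE 0 (contr w \<sigma>')}"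
      using s'(1) \<open>k \<noteq> 0\<close>
      by (simp add: pi_minus_def Lminus Ldual_inter_Lneg vec_span_singleton_scale)
  qed
qed

end
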